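(* Let $\mathcal{S}$ be an abstract numeration system and $Y\subseteq\mathbb{N}^{\mathbb{N}}$. Then $Y$ is weakly $\mathcal{S}$-codable if and only if $P_v(Y)$ is $\mathcal{S}$-recognizable for every finite word $v$ over $\mathbb{N}_{>0}$.
   Context: ANS: $\mathcal{S}=(L,\prec)$ with $L$ an infinite language over a finite alphabet $\Sigma$ and $\prec$ a total order on $L$ of order type $\omega$; $\mathrm{rep}(n)$ is the $n$-th word of $L$ (from $n=0$). For $(n_1,\dots,n_d)\in\mathbb{N}^d$, $\mathrm{rep}(n_1,\dots,n_d)$ is the word over $(\Sigma\cup\{\#\})^d$ obtained by left-padding each $\mathrm{rep}(n_i)$ with a new symbol $\#$ to the maximal length. $Z\subseteq\mathbb{N}^d$ is $\mathcal{S}$-recognizable if $\mathrm{rep}(Z)$ is regular. For $\mathbf{y}\in\mathbb{N}^{\mathbb{N}}$: $\sum\mathbf{y}=\sum_iy_i$; if $\sum\mathbf{y}=d<\infty$, $\nu(\mathbf{y})$ is the unique $(n_1,\dots,n_d)$ with $n_1\le\dots\le n_d$ and $y_j=|\{k:n_k=j\}|$ for all $j$. $Y$ is weakly $\mathcal{S}$-codable if for every $k$ the set $\{\nu(\mathbf{y}):\mathbf{y}\in Y,\sum\mathbf{y}\le k\}$ has $\mathcal{S}$-recognizable intersection with each $\mathbb{N}^i$. For $\mathbf{y}$ with finite support, $s(\mathbf{y})=(n_1,\dots,n_k)$ lists the support $\{n:y_n\ne0\}$ in increasing order, and $e(\mathbf{y})$ is the word obtained from $\mathbf{y}$ by erasing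 all $0$'s. For $v\in\mathbb{N}_{>0}^*$: $Q_v(Y)=\{\mathbf{y}\in Y:e(\mathbf{y})=v\}$ and $P_v(Y)=s(Q_v(Y))\subseteq\mathbb{N}^{|v|}$. *)

theory Defs
  imports Main
begin

definition regular_on :: "'b set \<Rightarrow> 'b list set \<Rightarrow> bool" where
  "regular_on A L \<longleftrightarrow> L \<subseteq> lists A \<and>
     (\<exists>(Q::nat set) (delta::nat \<Rightarrow> 'b \<Rightarrow> nat) q0 F.
        finite Q \<and> q0 \<in> Q \<and> (\<forall>q\<in>Q. \<forall>a\<in>A. delta q a \<in> Q) \<and> F \<subseteq> Q \<and>
        L = {w \<in> lists A. foldl delta q0 w \<in> F})"

text \<open>An abstract numeration system (L, \<prec>) over a finite alphabet Alph, with \<prec> of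
  order type omega, is represented by its enumeration rep : nat -> words, where rep n is the
  n-th word of L. Order type omega means exactly: rep is injective, L = range rep, and
  rep i \<prec> rep j iff i < j.\<close>

definition ANS :: "'a set \<Rightarrow> (nat \<Rightarrow> 'a list) \<Rightarrow> bool" where
  "ANS Alph rep \<longleftrightarrow> finite Alph \<and> inj rep \<and> (\<forall>n. set (rep n) \<subseteq> Alph)"

text \<open>Tuples in N^d are nat lists of length d; the padding symbol # is None.
  A letter of (Alph \<union> {#})^d is a list of length d.\<close>

definition pad :: "nat \<Rightarrow> 'a list \<Rightarrow> 'a option list" where
  "pad m w = replicate (m - length w) None @ map Some w"

definition rep_tuple :: "(nat \<Rightarrow> 'a list) \<Rightarrow> nat list \<Rightarrow> 'a option list list" where
  "rep_tuple rep ns =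
     (let m = fold max (map (\<lambda>n. length (rep n)) ns) 0
      in map (\<lambda>k. map (\<lambda>n. pad m (rep n) ! k) ns) [0..<m])"

definition tuple_alphabet :: "'a set \<Rightarrow> nat \<Rightarrow> 'a option list set" where
  "tuple_alphabet Alph d = {l. length l = d \<and> set l \<subseteq> insert None (Some ` Alph)}"

definition S_recognizable :: "'a set \<Rightarrow> (nat \<Rightarrow> 'a list) \<Rightarrow> nat \<Rightarrow> nat list set \<Rightarrow> bool" where
  "S_recognizable Alph rep d Z \<longleftrightarrow>
     Z \<subseteq> {ns. length ns = d} \<and> regular_on (tuple_alphabet Alph d) (rep_tuple rep ` Z)"

definition supp :: "(nat \<Rightarrow> nat) \<Rightarrow> nat set" where
  "supp y = {n. y n \<noteq> 0}"

text \<open>sum y \<le> k (the sum over all i; it is finite iff y has finite support).\<close>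
definition sum_le :: "(nat \<Rightarrow> nat) \<Rightarrow> nat \<Rightarrow> bool" where
  "sum_le y k \<longleftrightarrow> finite (supp y) \<and> sum y (supp y) \<le> k"

definition nu :: "(nat \<Rightarrow> nat) \<Rightarrow> nat list" where
  "nu y = (THE ns. sorted ns \<and> (\<forall>j. y j = count_list ns j))"

definition weakly_codable :: "'a set \<Rightarrow> (nat \<Rightarrow> 'a list) \<Rightarrow> (nat \<Rightarrow> nat) set \<Rightarrow> bool" where
  "weakly_codable Alph rep Y \<longleftrightarrow>
     (\<forall>k i. S_recognizable Alph rep i
              ({nu y | y. y \<in> Y \<and> sum_le y k} \<inter> {ns. length ns = i}))"

definition s_supp :: "(nat \<Rightarrow> nat) \<Rightarrow> nat list" where
  "s_supp y = sorted_list_of_set (supp y)"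

definition e_word :: "(nat \<Rightarrow> nat) \<Rightarrow> nat list" where
  "e_word y = map y (s_supp y)"

definition Q_v :: "nat list \<Rightarrow> (nat \<Rightarrow> nat) set \<Rightarrow> (nat \<Rightarrow> nat) set" where
  "Q_v v Y = {y \<in> Y. finite (supp y) \<and> e_word y = v}"

definition P_v :: "nat list \<Rightarrow> (nat \<Rightarrow> nat) set \<Rightarrow> nat list set" where
  "P_v v Y = s_supp ` Q_v v Y"

end

theory Submission
  imports Defs "HOL-Library.Nat_Bijection" "HOL-Library.Multiset"
begin

text \<open>The code \<open>\<nu>(y)\<close> is the list \<open>s(y)\<close> with its \<open>i\<close>-th entry repeated \<open>e(y)\<^sub>i\<close> times. So
  the codes of weight \<open>i\<close> are the union, over the finitely many compositions \<open>v\<close> of \<open>i\<close>, of the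
  stretched sets \<open>P\<^sub>v(Y)\<close>; stretching the components of a tuple-word is an injective
  letter-to-letter morphism and preserves regularity. Conversely, \<open>P\<^sub>v(Y)\<close> is the inverse image
  of the codes of weight \<open>sum v\<close> under that morphism, cut down to the words with pairwise distinct
  columns: as the representation is injective, distinct columns mean distinct entries, and then
  the entries are the support of \<open>y\<close> and \<open>v\<close> its word of nonzero values.\<close>

section \<open>Closure properties of regular languages\<close>

lemma foldl_in_states:
  assumes "\<forall>q\<in>Q. \<forall>a\<in>A. delta q a \<in> Q" "q \<in> Q" "w \<in> lists A"
  shows "foldl delta q w \<in> Q"
  using assms(2,3) by (induction w arbitrary: q) (use assms(1) in auto)

lemma regular_onI:
  assumes "L \<subseteq> lists A" "finite (Q::nat set)" "init \<in> Q" "\<forall>q\<in>Q. \<forall>a\<in>A. delta q a \<in> Q" "F \<subseteq> Q"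
    "\<And>w. w \<in> lists A \<Longrightarrow> w \<in> L \<longleftrightarrow> foldl delta init w \<in> F"
  shows "regular_on A L"
proof -
  have "w \<in> L \<longleftrightarrow> w \<in> lists A \<and> foldl delta init w \<in> F" for w
    using assms(1) assms(6)[of w] by blast
  then have "L = {w \<in> lists A. foldl delta init w \<in> F}" by blast
  with assms(1-5) show ?thesis unfolding regular_on_def by (intro conjI exI[of _ Q]) auto
qed

lemma regular_onE:
  assumes "regular_on A L"
  obtains Q :: "nat set" and delta init F where "finite Q" "init \<in> Q" "\<forall>q\<in>Q. \<forall>a\<in>A. delta q a \<in> Q"
    "F \<subseteq> Q" "L = {w \<in> lists A. foldl delta init w \<in> F}"
  using assms unfolding regular_on_def by (elim conjE exE) (rule that, assumption+)

lemma regular_on_subset_lists: "regular_on A L \<Longrightarrow> L \<subseteq> lists A"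
  by (simp add: regular_on_def)

lemma regular_on_empty: "regular_on A {}"
  by (rule regular_onI[where Q="{0}" and init=0 and F="{}" and delta="\<lambda>q a. 0"]) auto

lemma regular_on_lists: "regular_on A (lists A)"
proof -
  have "foldl (\<lambda>q a. 0) 0 w = (0::nat)" for w :: "'a list"
    by (induction w) auto
  then show ?thesis
    by (intro regular_onI[where Q="{0}" and init=0 and F="{0}" and delta="\<lambda>q a. 0"]) auto
qed

lemma foldl_prod_encode:
  "foldl (\<lambda>q a. prod_encode (d1 (fst (prod_decode q)) a, d2 (snd (prod_decode q)) a)) (prod_encode (p1, p2)) w
   = prod_encode (foldl d1 p1 w, foldl d2 p2 w)"
  by (induction w arbitrary: p1 p2) auto

text \<open>Product automaton; the pair states are coded as naturals by \<open>prod_encode\<close>.\<close>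

lemma regular_on_combine:
  assumes "regular_on A L1" "regular_on A L2" "L \<subseteq> lists A"
    and "\<And>w. w \<in> lists A \<Longrightarrow> w \<in> L \<longleftrightarrow> f (w \<in> L1) (w \<in> L2)"
  shows "regular_on A L"
proof -
  obtain Q1 :: "nat set" and d1 q1 F1 where A1: "finite Q1" "q1 \<in> Q1" "\<forall>q\<in>Q1. \<forall>a\<in>A. d1 q a \<in> Q1" "F1 \<subseteq> Q1"
    "L1 = {w \<in> lists A. foldl d1 q1 w \<in> F1}" using assms(1) by (rule regular_onE)
  obtain Q2 :: "nat set" and d2 q2 F2 where A2: "finite Q2" "q2 \<in> Q2" "\<forall>q\<in>Q2. \<forall>a\<in>A. d2 q a \<in> Q2" "F2 \<subseteq> Q2"
    "L2 = {w \<in> lists A. foldl d2 q2 w \<in> F2}" using assms(2) by (rule regular_onE)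
  define delta where "delta = (\<lambda>q a. prod_encode (d1 (fst (prod_decode q)) a, d2 (snd (prod_decode q)) a))"
  define F where "F = prod_encode ` {(a, b). a \<in> Q1 \<and> b \<in> Q2 \<and> f (a \<in> F1) (b \<in> F2)}"
  show ?thesis
  proof (rule regular_onI[where Q="prod_encode ` (Q1 \<times> Q2)" and delta=delta and init="prod_encode (q1, q2)" and F=F])
    fix w assume w: "w \<in> lists A"
    have "foldl d1 q1 w \<in> Q1" "foldl d2 q2 w \<in> Q2"
      using foldl_in_states[OF A1(3,2) w] foldl_in_states[OF A2(3,2) w] .
    moreover have "foldl delta (prod_encode (q1, q2)) w = prod_encode (foldl d1 q1 w, foldl d2 q2 w)"
      unfolding delta_def by (rule foldl_prod_encode)
    ultimately show "w \<in> L \<longleftrightarrow> foldl delta (prod_encode (q1, q2)) w \<in> F"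
      using assms(4)[OF w] w A1(5) A2(5) by (auto simp: F_def inj_prod_encode inj_eq)
  qed (use assms(3) A1 A2 in \<open>auto simp: delta_def F_def\<close>)
qed

lemma regular_on_Un: "regular_on A L1 \<Longrightarrow> regular_on A L2 \<Longrightarrow> regular_on A (L1 \<union> L2)"
  by (rule regular_on_combine[where f="(\<or>)"]) (auto simp: regular_on_def)

lemma regular_on_Int: "regular_on A L1 \<Longrightarrow> regular_on A L2 \<Longrightarrow> regular_on A (L1 \<inter> L2)"
  by (rule regular_on_combine[where f="(\<and>)"]) (auto simp: regular_on_def)

lemma regular_on_UN:
  "finite I \<Longrightarrow> (\<And>i. i \<in> I \<Longrightarrow> regular_on A (L i)) \<Longrightarrow> regular_on A (\<Union>i\<in>I. L i)"
  by (induction I rule: finite_induct) (auto intro: regular_on_empty regular_on_Un)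

lemma regular_on_lists_INT:
  "finite I \<Longrightarrow> (\<And>i. i \<in> I \<Longrightarrow> regular_on A (L i)) \<Longrightarrow> regular_on A (lists A \<inter> (\<Inter>i\<in>I. L i))"
proof (induction I rule: finite_induct)
  case (insert x F)
  have "lists A \<inter> (\<Inter>i\<in>insert x F. L i) = L x \<inter> (lists A \<inter> (\<Inter>i\<in>F. L i))" by auto
  then show ?case using insert by (simp add: regular_on_Int)
qed (simp add: regular_on_lists)

lemma regular_on_vimage_map:
  assumes "regular_on A L" "h ` B \<subseteq> A"
  shows "regular_on B {w \<in> lists B. map h w \<in> L}"
proof -
  obtain Q :: "nat set" and d init F where A1: "finite Q" "init \<in> Q" "\<forall>q\<in>Q. \<forall>a\<in>A. d q a \<in> Q" "F \<subseteq> Q"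
    "L = {w \<in> lists A. foldl d init w \<in> F}" using assms(1) by (rule regular_onE)
  have "foldl (\<lambda>q a. d q (h a)) q w = foldl d q (map h w)" for q w
    by (induction w arbitrary: q) auto
  then show ?thesis
    using A1 assms(2) by (intro regular_onI[where Q=Q and delta="\<lambda>q a. d q (h a)" and init=init and F=F])
      (auto simp: image_subset_iff)
qed

text \<open>A fresh sink state absorbs the letters outside the smaller alphabet.\<close>

lemma regular_on_mono_alphabet:
  assumes "regular_on B L" "B \<subseteq> A"
  shows "regular_on A L"
proof -
  obtain Q :: "nat set" and d init F where A1: "finite Q" "init \<in> Q" "\<forall>q\<in>Q. \<forall>a\<in>B. d q a \<in> Q" "F \<subseteq> Q"
    "L = {w \<in> lists B. foldl d init w \<in> F}" using assms(1) by (rule regular_onE)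
  obtain s :: nat where s: "s \<notin> Q" using A1(1) infinite_UNIV_nat ex_new_if_finite by blast
  define d' where "d' = (\<lambda>q a. if q \<in> Q \<and> a \<in> B then d q a else s)"
  have sink: "foldl d' s w = s" for w by (induction w) (auto simp: d'_def s)
  have run: "q \<in> Q \<Longrightarrow> foldl d' q w = (if w \<in> lists B then foldl d q w else s)" for q w
    by (induction w arbitrary: q) (use A1(3) sink in \<open>auto simp: d'_def\<close>)
  show ?thesis
    by (rule regular_onI[where Q="insert s Q" and delta=d' and init=init and F=F])
      (use A1 assms s regular_on_subset_lists[OF assms(1)] run in \<open>auto simp: d'_def\<close>)
qed

lemma regular_on_image_map:
  assumes "regular_on A L" "inj_on f A"
  shows "regular_on (f ` A) (map f ` L)"
proof -
  have LA: "L \<subseteq> lists A" using assms(1) by (rule regular_on_subset_lists)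
  have "map f ` L = {w \<in> lists (f ` A). map (inv_into A f) w \<in> L}"
  proof (intro set_eqI iffI)
    fix w assume "w \<in> map f ` L"
    then obtain u where "u \<in> L" "w = map f u" by blast
    moreover have "u \<in> lists A" using \<open>u \<in> L\<close> LA by blast
    then have "map (inv_into A f) (map f u) = u"
      using assms(2) by (induction u) auto
    ultimately show "w \<in> {w \<in> lists (f ` A). map (inv_into A f) w \<in> L}"
      using LA by force
  next
    fix w assume w: "w \<in> {w \<in> lists (f ` A). map (inv_into A f) w \<in> L}"
    then have "w \<in> lists (f ` A)" "map (inv_into A f) w \<in> L" by simp_all
    moreover from this(1) have "map f (map (inv_into A f) w) = w"
      by (induction w) (auto simp: f_inv_into_f)
    ultimately show "w \<in> map f ` L" by (metis image_eqI)
  qed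
  moreover have "regular_on (f ` A) {w \<in> lists (f ` A). map (inv_into A f) w \<in> L}"
    using assms(1) by (rule regular_on_vimage_map) (auto intro: inv_into_into)
  ultimately show ?thesis by simp
qed

lemma regular_on_ex_letter: "regular_on A {w \<in> lists A. \<exists>l\<in>set w. P l}"
proof -
  define d :: "nat \<Rightarrow> _ \<Rightarrow> nat" where "d = (\<lambda>q a. if q = 1 \<or> P a then 1 else 0)"
  have "q \<in> {0, 1} \<Longrightarrow> foldl d q w = (if q = 1 \<or> (\<exists>l\<in>set w. P l) then 1 else 0)" for q w
    by (induction w arbitrary: q) (auto simp: d_def)
  then show ?thesis
    by (intro regular_onI[where Q="{0, 1}" and delta=d and init=0 and F="{1}"]) (auto simp: d_def)
qed

section \<open>Stretching lists\<close>

fun replicate_each :: "nat list \<Rightarrow> 'b list \<Rightarrow> 'b list" where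
  "replicate_each (k # ks) (x # xs) = replicate k x @ replicate_each ks xs"
| "replicate_each _ _ = []"

lemma length_replicate_each: "length v = length xs \<Longrightarrow> length (replicate_each v xs) = sum_list v"
  by (induction v xs rule: replicate_each.induct) auto

lemma set_replicate_each_subset: "set (replicate_each v xs) \<subseteq> set xs"
  by (induction v xs rule: replicate_each.induct) auto

lemma set_replicate_each:
  "length v = length xs \<Longrightarrow> \<forall>k\<in>set v. 0 < k \<Longrightarrow> set (replicate_each v xs) = set xs"
  by (induction v xs rule: replicate_each.induct) auto

lemma map_replicate_each: "map f (replicate_each v xs) = replicate_each v (map f xs)"
  by (induction v xs rule: replicate_each.induct) auto

lemma sorted_replicate_each: "sorted xs \<Longrightarrow> sorted (replicate_each v xs)"
proof (induction v xs rule: replicate_each.induct)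
  case (1 k v x xs)
  then show ?case using set_replicate_each_subset[of v xs] by (auto simp: sorted_append)
qed auto

lemma sorted_replicate_eachD:
  "length v = length xs \<Longrightarrow> \<forall>k\<in>set v. 0 < k \<Longrightarrow> sorted (replicate_each v xs) \<Longrightarrow> sorted xs"
  by (induction v xs rule: replicate_each.induct) (auto simp: sorted_append set_replicate_each)

lemma inj_on_replicate_each:
  assumes "\<forall>k\<in>set v. 0 < k"
  shows "inj_on (replicate_each v) {xs. length xs = length v}"
proof -
  have "replicate_each v xs = replicate_each v xs' \<Longrightarrow> length xs = length v \<Longrightarrow> length xs' = length v
    \<Longrightarrow> xs = xs'" for xs xs' :: "'b list"
    using assms
  proof (induction v arbitrary: xs xs')
    case (Cons k v)
    then obtain x ys x' ys' where xs: "xs = x # ys" "xs' = x' # ys'"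
      by (metis length_Suc_conv)
    with Cons.prems(1) have eq: "replicate k x @ replicate_each v ys = replicate k x' @ replicate_each v ys'"
      by simp
    moreover have "0 < k" using Cons.prems(4) by simp
    ultimately have "x = x'" by (cases k) auto
    with eq have "replicate_each v ys = replicate_each v ys'" by simp
    with Cons.IH Cons.prems(2-4) xs \<open>x = x'\<close> show ?case by simp
  qed simp
  then show ?thesis by (auto intro: inj_onI)
qed

lemma count_list_replicate_each:
  "distinct xs \<Longrightarrow> length v = length xs \<Longrightarrow>
     map (count_list (replicate_each v xs)) xs = v \<and> (\<forall>j. j \<notin> set xs \<longrightarrow> count_list (replicate_each v xs) j = 0)"
proof (induction v xs rule: replicate_each.induct)
  case (1 k v x xs)
  have "count_list (replicate k x) j = (if j = x then k else 0)" for j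
    by (induction k) auto
  moreover have "map (count_list (replicate_each v xs)) xs = v"
    "\<forall>j. j \<notin> set xs \<longrightarrow> count_list (replicate_each v xs) j = 0"
    using 1 by auto
  moreover have "map (\<lambda>a. (if a = x then k else 0) + count_list (replicate_each v xs) a) xs
      = map (count_list (replicate_each v xs)) xs"
    using "1.prems"(1) by (auto intro: map_cong)
  ultimately show ?case using "1.prems" by auto
qed auto

lemma replicate_each_inject:
  assumes "sorted xs" "distinct xs" "length v = length xs" "\<forall>k\<in>set v. 0 < k"
    and "sorted xs'" "distinct xs'" "length v' = length xs'" "\<forall>k\<in>set v'. 0 < k"
    and "replicate_each v xs = replicate_each v' xs'"
  shows "v = v' \<and> xs = xs'"
proof -
  have "set xs = set xs'"
    using set_replicate_each[OF assms(3,4)] set_replicate_each[OF assms(7,8)] assms(9) by simp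
  then have "xs = xs'" using assms(1,2,5,6) sorted_distinct_set_unique by blast
  have "v = map (count_list (replicate_each v xs)) xs"
    using count_list_replicate_each[OF assms(2,3)] by simp
  also have "\<dots> = map (count_list (replicate_each v' xs')) xs'"
    using assms(9) \<open>xs = xs'\<close> by simp
  also have "\<dots> = v'"
    using count_list_replicate_each[OF assms(6,7)] by simp
  finally show ?thesis using \<open>xs = xs'\<close> by simp
qed

section \<open>The code of a finitely supported sequence\<close>

lemma sorted_count_list_unique:
  assumes "sorted (xs::nat list)" "sorted ys" "\<forall>j. count_list xs j = count_list ys j"
  shows "xs = ys"
proof -
  have "mset xs = mset ys" using assms(3) by (intro multiset_eqI) (simp add: count_mset)
  then show ?thesis using assms by (metis properties_for_sort sorted_sort_id)
qed

lemma s_supp_props: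
  assumes "finite (supp y)"
  shows "set (s_supp y) = supp y" "distinct (s_supp y)" "sorted (s_supp y)"
  using assms by (auto simp: s_supp_def)

lemma e_word_pos: "\<forall>k\<in>set (e_word y). 0 < k"
  by (cases "finite (supp y)") (auto simp: e_word_def s_supp_def supp_def)

lemma length_e_word: "length (e_word y) = length (s_supp y)"
  by (simp add: e_word_def)

lemma count_list_replicate_each_e_word:
  assumes "finite (supp y)"
  shows "count_list (replicate_each (e_word y) (s_supp y)) j = y j"
proof -
  have c: "map (count_list (replicate_each (e_word y) (s_supp y))) (s_supp y) = e_word y"
    "\<forall>j. j \<notin> set (s_supp y) \<longrightarrow> count_list (replicate_each (e_word y) (s_supp y)) j = 0"
    using count_list_replicate_each[of "s_supp y" "e_word y"] s_supp_props[OF assms]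
    by (auto simp: e_word_def)
  show ?thesis
  proof (cases "j \<in> supp y")
    case True
    then show ?thesis using c(1) s_supp_props[OF assms] unfolding e_word_def by (auto simp: map_eq_conv)
  next
    case False
    then show ?thesis using c(2) s_supp_props[OF assms] by (auto simp: supp_def)
  qed
qed

lemma nu_eq:
  assumes "finite (supp y)"
  shows "nu y = replicate_each (e_word y) (s_supp y)"
  unfolding nu_def
proof (rule the_equality)
  show R: "sorted (replicate_each (e_word y) (s_supp y)) \<and>
      (\<forall>j. y j = count_list (replicate_each (e_word y) (s_supp y)) j)"
    using sorted_replicate_each s_supp_props[OF assms] count_list_replicate_each_e_word[OF assms] by auto
  fix ns assume "sorted ns \<and> (\<forall>j. y j = count_list ns j)"
  with R show "ns = replicate_each (e_word y) (s_supp y)"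
    by (intro sorted_count_list_unique) auto
qed

lemma nu_eq_replicate_each_iff:
  assumes "finite (supp y)" "\<forall>k\<in>set v. 0 < k" "length ns = length v" "distinct ns"
  shows "nu y = replicate_each v ns \<longleftrightarrow> s_supp y = ns \<and> e_word y = v"
proof
  assume nu: "nu y = replicate_each v ns"
  have eq: "replicate_each (e_word y) (s_supp y) = replicate_each v ns"
    using nu nu_eq[OF assms(1)] by simp
  then have "sorted (replicate_each v ns)"
    using sorted_replicate_each[OF s_supp_props(3)[OF assms(1)], of "e_word y"] by simp
  then have "sorted ns"
    by (rule sorted_replicate_eachD[OF assms(3)[symmetric] assms(2)])
  then show "s_supp y = ns \<and> e_word y = v"
    using replicate_each_inject[OF _ _ length_e_word e_word_pos _ assms(4) assms(3)[symmetric] assms(2) eq]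
      s_supp_props[OF assms(1)] by blast
qed (simp add: nu_eq[OF assms(1)])

lemma sum_supp_eq_sum_list_e_word:
  assumes "finite (supp y)"
  shows "sum y (supp y) = sum_list (e_word y)"
  using sum_list_distinct_conv_sum_set[of "s_supp y" y] s_supp_props[OF assms] by (simp add: e_word_def)

lemma length_nu:
  assumes "finite (supp y)"
  shows "length (nu y) = sum y (supp y)"
  using assms by (simp add: nu_eq length_replicate_each length_e_word sum_supp_eq_sum_list_e_word)

lemma length_P_v: "ns \<in> P_v v Y \<Longrightarrow> length ns = length v"
  by (auto simp: P_v_def Q_v_def e_word_def)

definition compositions :: "nat \<Rightarrow> nat list set" where
  "compositions n = {v. (\<forall>k\<in>set v. 0 < k) \<and> sum_list v = n}"

lemma finite_compositions: "finite (compositions n)"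
proof (rule finite_subset)
  have "length v \<le> sum_list v" if "\<forall>k\<in>set v. 0 < k" for v :: "nat list"
    using that by (induction v) auto
  then show "compositions n \<subseteq> {v. set v \<subseteq> {0..n} \<and> length v \<le> n}"
    using member_le_sum_list by (fastforce simp: compositions_def)
qed (rule finite_lists_length_le, simp)

lemma nu_image_eq_UN_P_v:
  "{nu y | y. y \<in> Y \<and> sum_le y k} \<inter> {ns. length ns = i}
     = (\<Union>v\<in>{v \<in> compositions i. i \<le> k}. replicate_each v ` P_v v Y)"
proof (intro set_eqI iffI)
  fix ns assume "ns \<in> {nu y | y. y \<in> Y \<and> sum_le y k} \<inter> {ns. length ns = i}"
  then obtain y where y: "y \<in> Y" "sum_le y k" "length (nu y) = i" "ns = nu y" by auto
  have fy: "finite (supp y)" using y(2) by (simp add: sum_le_def)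
  have "e_word y \<in> {v \<in> compositions i. i \<le> k}"
    using e_word_pos y length_nu[OF fy] sum_supp_eq_sum_list_e_word[OF fy]
    by (auto simp: compositions_def sum_le_def)
  moreover have "s_supp y \<in> P_v (e_word y) Y" using y fy by (auto simp: P_v_def Q_v_def)
  ultimately show "ns \<in> (\<Union>v\<in>{v \<in> compositions i. i \<le> k}. replicate_each v ` P_v v Y)"
    using nu_eq[OF fy] y(4) by blast
next
  fix ns assume "ns \<in> (\<Union>v\<in>{v \<in> compositions i. i \<le> k}. replicate_each v ` P_v v Y)"
  then obtain v y where v: "v \<in> compositions i" "i \<le> k"
    and y: "y \<in> Y" "finite (supp y)" "e_word y = v" "ns = replicate_each v (s_supp y)"
    by (auto simp: P_v_def Q_v_def)
  have "nu y = ns" "sum y (supp y) = i"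
    using nu_eq sum_supp_eq_sum_list_e_word y v(1) by (auto simp: compositions_def)
  then show "ns \<in> {nu y | y. y \<in> Y \<and> sum_le y k} \<inter> {ns. length ns = i}"
    using y(1,2) v(2) length_nu[OF y(2)] by (auto simp: sum_le_def)
qed

section \<open>Columns of tuple words\<close>

definition columns :: "nat \<Rightarrow> 'b list list \<Rightarrow> 'b list list" where
  "columns d w = map (\<lambda>j. map (\<lambda>l. l ! j) w) [0..<d]"

lemma columns_Suc: "\<forall>l\<in>set w. l \<noteq> [] \<Longrightarrow> columns (Suc d) w = map hd w # columns d (map tl w)"
  unfolding columns_def map_upt_Suc
  by (auto simp: hd_conv_nth intro!: map_cong) (metis list.exhaust_sel nth_Cons_Suc)

lemma columns_map_replicate_each:
  "\<forall>l\<in>set w. length l = length v \<Longrightarrow> \<forall>k\<in>set v. 0 < k \<Longrightarrow>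
    columns (sum_list v) (map (replicate_each v) w) = replicate_each v (columns (length v) w)"
proof (induction v arbitrary: w)
  case Nil then show ?case by (simp add: columns_def)
next
  case (Cons x v)
  have ne: "\<forall>l\<in>set w. l \<noteq> []" using Cons.prems by auto
  have rl: "replicate_each (x # v) l = replicate x (hd l) @ replicate_each v (tl l)" if "l \<in> set w" for l
    using ne that by (cases l) auto
  have ltl: "length (replicate_each v (tl l)) = sum_list v" if "l \<in> set w" for l
    using Cons.prems that by (auto simp: length_replicate_each)
  have IH: "columns (sum_list v) (map (replicate_each v) (map tl w))
      = replicate_each v (columns (length v) (map tl w))"
    using Cons.prems by (intro Cons.IH) auto
  have "columns (sum_list (x # v)) (map (replicate_each (x # v)) w)
      = map (\<lambda>j. map (\<lambda>l. replicate_each (x # v) l ! j) w) ([0..<x] @ [x..<x + sum_list v])"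
    unfolding columns_def by (simp add: upt_add_eq_append[of 0 x, simplified])
  also have "\<dots> = replicate x (map hd w) @ columns (sum_list v) (map (replicate_each v) (map tl w))"
  proof -
    have "map (\<lambda>j. map (\<lambda>l. replicate_each (x # v) l ! j) w) [0..<x] = replicate x (map hd w)"
      by (rule nth_equalityI) (auto simp: rl nth_append intro!: map_cong)
    moreover have "map (\<lambda>j. map (\<lambda>l. replicate_each (x # v) l ! j) w) [x..<x + sum_list v]
        = columns (sum_list v) (map (replicate_each v) (map tl w))"
      unfolding columns_def by (rule nth_equalityI) (auto simp: rl ltl nth_append intro!: map_cong)
    ultimately show ?thesis by simp
  qed
  also have "\<dots> = replicate_each (x # v) (columns (length (x # v)) w)"
    using ne IH by (simp add: columns_Suc)
  finally show ?case .
qed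

definition rep_width :: "(nat \<Rightarrow> 'a list) \<Rightarrow> nat list \<Rightarrow> nat" where
  "rep_width rep ns = fold max (map (\<lambda>n. length (rep n)) ns) 0"

lemma rep_tuple_eq:
  "rep_tuple rep ns = map (\<lambda>k. map (\<lambda>n. pad (rep_width rep ns) (rep n) ! k) ns) [0..<rep_width rep ns]"
  by (simp add: rep_tuple_def rep_width_def Let_def)

lemma rep_width_eq_Max: "rep_width rep ns = Max (insert 0 ((\<lambda>n. length (rep n)) ` set ns))"
proof -
  have "rep_width rep ns = Max (set (0 # map (\<lambda>n. length (rep n)) ns))"
    unfolding rep_width_def by (simp only: Max.set_eq_fold)
  then show ?thesis by simp
qed

lemma length_rep_le_rep_width: "n \<in> set ns \<Longrightarrow> length (rep n) \<le> rep_width rep ns"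
  unfolding rep_width_eq_Max by (rule Max_ge) auto

lemma length_pad: "length w \<le> m \<Longrightarrow> length (pad m w) = m"
  by (simp add: pad_def)

lemma set_pad: "set (pad m w) \<subseteq> insert None (Some ` set w)"
  by (auto simp: pad_def)

lemma inj_pad: "inj (pad m)"
proof (rule inj_on_inverseI)
  show "map the (filter (\<lambda>x. x \<noteq> None) (pad m w)) = w" for w :: "'a list"
    by (induction w) (auto simp: pad_def filter_replicate)
qed

lemma length_letter_rep_tuple: "l \<in> set (rep_tuple rep ns) \<Longrightarrow> length l = length ns"
  by (auto simp: rep_tuple_eq)

lemma columns_rep_tuple:
  "columns (length ns) (rep_tuple rep ns) = map (\<lambda>n. pad (rep_width rep ns) (rep n)) ns"
proof (rule nth_equalityI)
  fix j assume "j < length (columns (length ns) (rep_tuple rep ns))"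
  then have j: "j < length ns" by (simp add: columns_def)
  let ?p = "pad (rep_width rep ns) (rep (ns ! j))"
  have "length ?p = rep_width rep ns"
    using j by (intro length_pad length_rep_le_rep_width) auto
  have "columns (length ns) (rep_tuple rep ns) ! j = map (\<lambda>k. ?p ! k) [0..<rep_width rep ns]"
    using j by (simp add: columns_def rep_tuple_eq)
  also have "\<dots> = ?p"
    using map_nth[of ?p] \<open>length ?p = _\<close> by simp
  finally show "columns (length ns) (rep_tuple rep ns) ! j = map (\<lambda>n. pad (rep_width rep ns) (rep n)) ns ! j"
    using j by simp
qed (simp add: columns_def)

lemma rep_tuple_nth_eq_iff:
  assumes "inj rep" "j < length ns" "k < length ns"
  shows "ns ! j = ns ! k \<longleftrightarrow> (\<forall>l\<in>set (rep_tuple rep ns). l ! j = l ! k)"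
proof -
  have "(\<forall>l\<in>set (rep_tuple rep ns). l ! j = l ! k)
      \<longleftrightarrow> columns (length ns) (rep_tuple rep ns) ! j = columns (length ns) (rep_tuple rep ns) ! k"
    using assms by (simp add: columns_def map_eq_conv)
  also have "\<dots> \<longleftrightarrow> pad (rep_width rep ns) (rep (ns ! j)) = pad (rep_width rep ns) (rep (ns ! k))"
    using assms by (simp add: columns_rep_tuple)
  also have "\<dots> \<longleftrightarrow> ns ! j = ns ! k"
    using assms(1) inj_pad by (metis injD)
  finally show ?thesis by simp
qed

lemma rep_tuple_in_lists_tuple_alphabet:
  assumes "\<forall>n. set (rep n) \<subseteq> Alph"
  shows "rep_tuple rep ns \<in> lists (tuple_alphabet Alph (length ns))"
proof -
  have "pad (rep_width rep ns) (rep n) ! k \<in> insert None (Some ` Alph)"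
    if "n \<in> set ns" "k < rep_width rep ns" for n k
  proof -
    have "length (pad (rep_width rep ns) (rep n)) = rep_width rep ns"
      using that by (intro length_pad length_rep_le_rep_width)
    then have "pad (rep_width rep ns) (rep n) ! k \<in> set (pad (rep_width rep ns) (rep n))"
      using that by simp
    then show ?thesis using set_pad assms by blast
  qed
  then show ?thesis by (fastforce simp: rep_tuple_eq tuple_alphabet_def)
qed

lemma rep_tuple_replicate_each:
  assumes "length v = length ns" "\<forall>k\<in>set v. 0 < k"
  shows "rep_tuple rep (replicate_each v ns) = map (replicate_each v) (rep_tuple rep ns)"
proof -
  have "rep_width rep (replicate_each v ns) = rep_width rep ns"
    using set_replicate_each[OF assms] by (simp add: rep_width_eq_Max)
  then show ?thesis unfolding rep_tuple_eq by (simp add: map_replicate_each)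
qed

lemma rep_tuple_map_replicate_eachE:
  assumes "inj rep" "\<forall>k\<in>set v. 0 < k" "\<forall>l\<in>set w. length l = length v" "length ms = sum_list v"
    and "map (replicate_each v) w = rep_tuple rep ms"
  obtains ns where "length ns = length v" "ms = replicate_each v ns" "w = rep_tuple rep ns"
proof -
  define f where "f = (\<lambda>n. pad (rep_width rep ms) (rep n))"
  have "inj f" using inj_compose[OF inj_pad assms(1)] by (simp add: f_def comp_def)
  have "map f ms = columns (sum_list v) (rep_tuple rep ms)"
    using columns_rep_tuple[of ms rep] assms(4) by (simp add: f_def)
  also have "\<dots> = replicate_each v (columns (length v) w)"
    using columns_map_replicate_each[OF assms(3,2)] assms(5) by simp
  finally have fms: "map f ms = replicate_each v (columns (length v) w)" .
  define ns where "ns = map (inv f) (columns (length v) w)"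
  have lns: "length ns = length v" by (simp add: ns_def columns_def)
  have "ms = map (inv f) (map f ms)"
    using \<open>inj f\<close> by (simp add: comp_def)
  then have ms: "ms = replicate_each v ns"
    by (simp add: fms ns_def map_replicate_each)
  have "map (replicate_each v) (rep_tuple rep ns) = map (replicate_each v) w"
    using rep_tuple_replicate_each[of v ns rep] assms(2,5) lns ms by simp
  moreover have "inj_on (replicate_each v) (set (rep_tuple rep ns) \<union> set w)"
    using length_letter_rep_tuple[of _ rep ns] lns assms(3)
    by (intro inj_on_subset[OF inj_on_replicate_each[OF assms(2)]]) auto
  ultimately have "w = rep_tuple rep ns"
    by (simp add: inj_on_map_eq_map)
  then show ?thesis using that lns ms by blast
qed

section \<open>Recognizability of the sets P_v\<close>

definition distinct_columns :: "nat \<Rightarrow> 'b list list \<Rightarrow> bool" where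
  "distinct_columns d w \<longleftrightarrow> (\<forall>j<d. \<forall>k<d. j \<noteq> k \<longrightarrow> (\<exists>l\<in>set w. l ! j \<noteq> l ! k))"

lemma distinct_iff_distinct_columns_rep_tuple:
  "inj rep \<Longrightarrow> distinct ns \<longleftrightarrow> distinct_columns (length ns) (rep_tuple rep ns)"
  by (auto simp: distinct_conv_nth distinct_columns_def rep_tuple_nth_eq_iff)

lemma regular_on_distinct_columns: "regular_on A {w \<in> lists A. distinct_columns d w}"
proof -
  define I where "I = {(j, k). j < d \<and> k < d \<and> j \<noteq> k}"
  have "{w \<in> lists A. distinct_columns d w}
      = lists A \<inter> (\<Inter>p\<in>I. {w \<in> lists A. \<exists>l\<in>set w. l ! fst p \<noteq> l ! snd p})"
    by (auto simp: I_def distinct_columns_def)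
  moreover have "finite I"
    by (rule finite_subset[of _ "{..<d} \<times> {..<d}"]) (auto simp: I_def)
  ultimately show ?thesis
    by (simp add: regular_on_lists_INT regular_on_ex_letter)
qed

lemma replicate_each_in_tuple_alphabet:
  "l \<in> tuple_alphabet Alph (length v) \<Longrightarrow> replicate_each v l \<in> tuple_alphabet Alph (sum_list v)"
  using set_replicate_each_subset[of v l] by (auto simp: tuple_alphabet_def length_replicate_each)

lemma regular_on_map_replicate_each:
  assumes "\<forall>k\<in>set v. 0 < k" "regular_on (tuple_alphabet Alph (length v)) R"
  shows "regular_on (tuple_alphabet Alph (sum_list v)) (map (replicate_each v) ` R)"
proof (rule regular_on_mono_alphabet)
  have "inj_on (replicate_each v) (tuple_alphabet Alph (length v))"
    by (rule inj_on_subset[OF inj_on_replicate_each[OF assms(1)]]) (auto simp: tuple_alphabet_def)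
  with assms(2) show "regular_on (replicate_each v ` tuple_alphabet Alph (length v)) (map (replicate_each v) ` R)"
    by (rule regular_on_image_map)
qed (use replicate_each_in_tuple_alphabet in blast)

lemma rep_tuple_P_v_eq:
  fixes Y :: "(nat \<Rightarrow> nat) set"
  assumes "ANS Alph rep" "\<forall>k\<in>set v. 0 < k"
  defines "Z \<equiv> {nu y | y. y \<in> Y \<and> sum_le y (sum_list v)} \<inter> {ns. length ns = sum_list v}"
  shows "rep_tuple rep ` P_v v Y
    = {w \<in> lists (tuple_alphabet Alph (length v)). map (replicate_each v) w \<in> rep_tuple rep ` Z}
      \<inter> {w \<in> lists (tuple_alphabet Alph (length v)). distinct_columns (length v) w}"
    (is "_ = ?S \<inter> ?D")
proof (intro set_eqI iffI)
  have rep: "inj rep" "\<forall>n. set (rep n) \<subseteq> Alph" using assms(1) by (auto simp: ANS_def)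
  {
    fix w assume "w \<in> rep_tuple rep ` P_v v Y"
    then obtain y where y: "y \<in> Y" "finite (supp y)" "e_word y = v" and w: "w = rep_tuple rep (s_supp y)"
      by (auto simp: P_v_def Q_v_def)
    have len: "length (s_supp y) = length v" using y(3) length_e_word by metis
    have "s_supp y \<in> P_v v Y" using y by (auto simp: P_v_def Q_v_def)
    then have "replicate_each v (s_supp y) \<in> Z"
      using assms(2) unfolding Z_def nu_image_eq_UN_P_v by (auto simp: compositions_def)
    moreover have "map (replicate_each v) w = rep_tuple rep (replicate_each v (s_supp y))"
      unfolding w by (rule rep_tuple_replicate_each[OF len[symmetric] assms(2), symmetric])
    moreover have "w \<in> lists (tuple_alphabet Alph (length v))"
      using rep_tuple_in_lists_tuple_alphabet[OF rep(2)] w len by metis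
    moreover have "distinct_columns (length v) w"
      using distinct_iff_distinct_columns_rep_tuple[OF rep(1)] s_supp_props(2)[OF y(2)] w len by metis
    ultimately show "w \<in> ?S \<inter> ?D" by auto
  }
  fix w assume "w \<in> ?S \<inter> ?D"
  then have w: "w \<in> lists (tuple_alphabet Alph (length v))" "distinct_columns (length v) w"
    and "map (replicate_each v) w \<in> rep_tuple rep ` Z" by auto
  then obtain y where y: "y \<in> Y" "sum_le y (sum_list v)" "length (nu y) = sum_list v"
    and wy: "map (replicate_each v) w = rep_tuple rep (nu y)"
    unfolding Z_def by auto
  have fy: "finite (supp y)" using y(2) by (simp add: sum_le_def)
  have "\<forall>l\<in>set w. length l = length v" using w(1) by (auto simp: tuple_alphabet_def)
  then obtain ns where ns: "length ns = length v" "nu y = replicate_each v ns" "w = rep_tuple rep ns"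
    using rep_tuple_map_replicate_eachE[OF rep(1) assms(2) _ y(3) wy] by blast
  have "distinct ns"
    using distinct_iff_distinct_columns_rep_tuple[OF rep(1)] w(2) ns(1,3) by metis
  then have "s_supp y = ns \<and> e_word y = v"
    using nu_eq_replicate_each_iff[OF fy assms(2) ns(1)] ns(2) by blast
  then show "w \<in> rep_tuple rep ` P_v v Y"
    using y(1) fy ns(3) by (auto simp: P_v_def Q_v_def)
qed

lemma S_recognizable_P_v_if_weakly_codable:
  assumes "ANS Alph rep" "weakly_codable Alph rep Y" "\<forall>k\<in>set v. 0 < k"
  shows "S_recognizable Alph rep (length v) (P_v v Y)"
proof -
  define Z where "Z = {nu y | y. y \<in> Y \<and> sum_le y (sum_list v)} \<inter> {ns. length ns = sum_list v}"
  have "regular_on (tuple_alphabet Alph (sum_list v)) (rep_tuple rep ` Z)"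
    using assms(2) by (simp add: weakly_codable_def S_recognizable_def Z_def)
  then have "regular_on (tuple_alphabet Alph (length v))
      {w \<in> lists (tuple_alphabet Alph (length v)). map (replicate_each v) w \<in> rep_tuple rep ` Z}"
    by (rule regular_on_vimage_map) (auto intro: replicate_each_in_tuple_alphabet)
  then have "regular_on (tuple_alphabet Alph (length v)) (rep_tuple rep ` P_v v Y)"
    unfolding rep_tuple_P_v_eq[OF assms(1,3), where Y=Y, folded Z_def]
    by (rule regular_on_Int[OF _ regular_on_distinct_columns])
  then show ?thesis
    using length_P_v by (auto simp: S_recognizable_def)
qed

lemma weakly_codable_if_S_recognizable_P_v:
  assumes "\<forall>v. (\<forall>k\<in>set v. 0 < k) \<longrightarrow> S_recognizable Alph rep (length v) (P_v v Y)"
  shows "weakly_codable Alph rep Y"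
  unfolding weakly_codable_def S_recognizable_def
proof (intro allI conjI)
  fix k i
  let ?V = "{v \<in> compositions i. i \<le> k}"
  have stretch: "rep_tuple rep ` replicate_each v ` P_v v Y = map (replicate_each v) ` rep_tuple rep ` P_v v Y"
    if "v \<in> ?V" for v
    unfolding image_image
  proof (rule image_cong[OF refl])
    fix ns assume "ns \<in> P_v v Y"
    moreover have "\<forall>k\<in>set v. 0 < k" using that by (simp add: compositions_def)
    ultimately show "rep_tuple rep (replicate_each v ns) = map (replicate_each v) (rep_tuple rep ns)"
      using rep_tuple_replicate_each length_P_v by metis
  qed
  have "rep_tuple rep ` ({nu y | y. y \<in> Y \<and> sum_le y k} \<inter> {ns. length ns = i})
      = (\<Union>v\<in>?V. map (replicate_each v) ` rep_tuple rep ` P_v v Y)"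
    unfolding nu_image_eq_UN_P_v image_UN using stretch by simp
  also have "regular_on (tuple_alphabet Alph i) \<dots>"
  proof (rule regular_on_UN)
    show "finite ?V" using finite_compositions by simp
    fix v assume "v \<in> ?V"
    then have "\<forall>k\<in>set v. 0 < k" "sum_list v = i" by (auto simp: compositions_def)
    with assms show "regular_on (tuple_alphabet Alph i) (map (replicate_each v) ` rep_tuple rep ` P_v v Y)"
      using regular_on_map_replicate_each by (fastforce simp: S_recognizable_def)
  qed
  finally show "regular_on (tuple_alphabet Alph i)
      (rep_tuple rep ` ({nu y | y. y \<in> Y \<and> sum_le y k} \<inter> {ns. length ns = i}))" .
qed auto

theorem mainTheorem5:
  fixes Alph :: "'a set" and rep :: "nat \<Rightarrow> 'a list" and Y :: "(nat \<Rightarrow> nat) set"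
  assumes "ANS Alph rep"
  shows "weakly_codable Alph rep Y \<longleftrightarrow>
           (\<forall>v. (\<forall>x\<in>set v. 0 < x) \<longrightarrow> S_recognizable Alph rep (length v) (P_v v Y))"
  using S_recognizable_P_v_if_weakly_codable[OF assms] weakly_codable_if_S_recognizable_P_v by blast

end
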